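(* Let $k\ge1$, $d\ge1$ and $n_1,\dots,n_k\ge2$ be integers and $n:=n_1\cdots n_k$. There exists an injective $\Sigma_k(n_1,\dots,n_k)$-equivariant linear map \[ W_n^{\oplus(d-1)}\longrightarrow W_k(d;n_1,\dots,n_k), \] where $\Sigma_k(n_1,\dots,n_k)$ acts on $W_n^{\oplus(d-1)}$ via the inclusion $\Sigma_k(n_1,\dots,n_k)\subseteq S_n$.
   Context: $W_m=\{x\in\mathbb{R}^m:\sum x_i=0\}$ with $S_m$ acting by $\tau\cdot(x_1,\dots,x_m)=(x_{\tau^{-1}(1)},\dots,x_{\tau^{-1}(m)})$, diagonally on $W_m^{\oplus(d-1)}$. Wreath product action: if $G$ acts on $X$ and $S_m$ on $Y$, $G^{\times m}\rtimes S_m$ ($S_m$ permuting factors) acts on $X^{\times m}\times Y$ by $(g_1,\dots,g_m;\sigma)\cdot(x_1,\dots,x_m;y)=(g_1x_{\sigma^{-1}(1)},\dots,g_mx_{\sigma^{-1}(m)};\sigma y)$. $\Sigma_1(n_1)=S_{n_1}$, $\Sigma_k(n_1,\dots,n_k)=\Sigma_{k-1}(n_1,\dots,n_{k-1})^{\times n_k}\rtimes S_{n_k}$. $W_1(d;n_1)=W_{n_1}^{\oplus(d-1)}$, $W_k(d;n_1,\dots,n_k)=W_{k-1}(d;n_1,\dots,n_{k-1})^{\oplus n_k}\oplus W_{n_k}^{\oplus(d-1)}$ with the inductively defined wreath product action. Inclusion $\Sigma_k(n_1,\dots,n_k)\subseteq S_n$: for $k=1$ the identity; for $k\ge2$, with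 $n'=n_1\cdots n_{k-1}$, identify $[n]$ with $[n']\times[n_k]$ via $(i,j)\leftrightarrow(j-1)n'+i$, and let $(\Sigma_1,\dots,\Sigma_{n_k};\sigma)$ act by $(i,j)\mapsto(\Sigma_{\sigma(j)}(i),\sigma(j))$, with each $\Sigma_l\in\Sigma_{k-1}(n_1,\dots,n_{k-1})\subseteq S_{n'}$ inductively. *)

theory Defs
  imports Complex_Main "HOL-Combinatorics.Permutations"
begin

text \<open>All index sets are 0-based: [m] is rendered as {0..<m}.
  Lists ns = [n_1,...,n_k]; the recursive definitions below work on the
  reversed list (n_k # ... # n_1), so that the head is the outermost factor.\<close>

text \<open>Elements of the iterated wreath products Sigma_k.
  Base s : an element s of S_{n_1} (k = 1).
  Wr gs s : the element (g_1,...,g_{n_k}; s) with gs = [g_1,...,g_{n_k}].\<close>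
datatype wr = Base "nat \<Rightarrow> nat" | Wr "wr list" "nat \<Rightarrow> nat"

fun inSigR :: "nat list \<Rightarrow> wr \<Rightarrow> bool" where
  "inSigR [m] (Base s) = (s permutes {..<m})"
| "inSigR (m # ms) (Wr gs s) =
     (ms \<noteq> [] \<and> length gs = m \<and> (\<forall>g\<in>set gs. inSigR ms g) \<and> s permutes {..<m})"
| "inSigR _ _ = False"

definition inSigma :: "nat list \<Rightarrow> wr \<Rightarrow> bool" where
  "inSigma ns g = inSigR (rev ns) g"

text \<open>The inclusion Sigma_k(n_1,...,n_k) into S_n, with [n] = [n'] x [n_k] via
  (i,j) <-> j*n' + i (0-based version of (j-1)n'+i), and
  (g_1..g_{n_k}; s) acting by (i,j) |-> (g_{s j} i, s j).\<close>
fun embR :: "nat list \<Rightarrow> wr \<Rightarrow> nat \<Rightarrow> nat" where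
  "embR [m] (Base s) = s"
| "embR (m # ms) (Wr gs s) =
     (\<lambda>p. if p < m * prod_list ms
          then s (p div prod_list ms) * prod_list ms
               + embR ms (gs ! s (p div prod_list ms)) (p mod prod_list ms)
          else p)"
| "embR _ _ = id"

definition embS :: "nat list \<Rightarrow> wr \<Rightarrow> nat \<Rightarrow> nat" where
  "embS ns g = embR (rev ns) g"

text \<open>W_n^{(d-1)}: vectors x(a,i), a < d-1 (copy), i < n (coordinate),
  zero outside this range, with coordinate sum 0 in each copy.\<close>
definition Wn :: "nat \<Rightarrow> nat \<Rightarrow> (nat \<times> nat \<Rightarrow> real) set" where
  "Wn d n = {x. (\<forall>a i. x (a, i) \<noteq> 0 \<longrightarrow> a < d - 1 \<and> i < n)
               \<and> (\<forall>a < d - 1. (\<Sum>i<n. x (a, i)) = 0)}"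

definition actS :: "(nat \<Rightarrow> nat) \<Rightarrow> (nat \<times> nat \<Rightarrow> real) \<Rightarrow> nat \<times> nat \<Rightarrow> real" where
  "actS t x = (\<lambda>(a, i). x (a, inv t i))"

text \<open>W_k(d;n_1,...,n_k) as functions on coordinates (lists of naturals):
  coordinate 0 # j # c is coordinate c of the j-th summand W_{k-1} (j < n_k);
  coordinate [1, a, i] is coordinate i of the a-th copy of W_{n_k} (a < d-1).\<close>
fun inWR :: "nat \<Rightarrow> nat list \<Rightarrow> (nat list \<Rightarrow> real) \<Rightarrow> bool" where
  "inWR d [] x = False"
| "inWR d [m] x =
     ((\<forall>c. x c \<noteq> 0 \<longrightarrow> (\<exists>a i. c = [1, a, i] \<and> a < d - 1 \<and> i < m))
      \<and> (\<forall>a < d - 1. (\<Sum>i<m. x [1, a, i]) = 0))"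
| "inWR d (m # ms) x =
     ((\<forall>c. x c \<noteq> 0 \<longrightarrow> (\<exists>j c'. c = 0 # j # c' \<and> j < m)
                          \<or> (\<exists>a i. c = [1, a, i] \<and> a < d - 1 \<and> i < m))
      \<and> (\<forall>j < m. inWR d ms (\<lambda>c'. x (0 # j # c')))
      \<and> (\<forall>a < d - 1. (\<Sum>i<m. x [1, a, i]) = 0))"

definition Wk :: "nat \<Rightarrow> nat list \<Rightarrow> (nat list \<Rightarrow> real) set" where
  "Wk d ns = {x. inWR d (rev ns) x}"

definition lastpart :: "(nat \<Rightarrow> nat) \<Rightarrow> (nat list \<Rightarrow> real) \<Rightarrow> nat list \<Rightarrow> real" where
  "lastpart s x c = (if length c = 3 \<and> c ! 0 = 1 then x [1, c ! 1, inv s (c ! 2)] else x c)"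

text \<open>Wreath product action:
  (g_1..g_m; s).(x_1..x_m; y) = (g_1 x_{s^{-1} 1}, ..., g_m x_{s^{-1} m}; s y).\<close>
fun actR :: "nat list \<Rightarrow> wr \<Rightarrow> (nat list \<Rightarrow> real) \<Rightarrow> nat list \<Rightarrow> real" where
  "actR [m] (Base s) x c = lastpart s x c"
| "actR (m # ms) (Wr gs s) x c =
     (if c \<noteq> [] \<and> hd c = 0 \<and> tl c \<noteq> []
      then actR ms (gs ! hd (tl c)) (\<lambda>c''. x (0 # inv s (hd (tl c)) # c'')) (tl (tl c))
      else lastpart s x c)"
| "actR _ _ x c = x c"

definition actW :: "nat list \<Rightarrow> wr \<Rightarrow> (nat list \<Rightarrow> real) \<Rightarrow> nat list \<Rightarrow> real" where
  "actW ns g x = actR (rev ns) g x"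

definition lin_on :: "('a \<Rightarrow> real) set \<Rightarrow> (('a \<Rightarrow> real) \<Rightarrow> ('b \<Rightarrow> real)) \<Rightarrow> bool" where
  "lin_on A f = (\<forall>x\<in>A. \<forall>y\<in>A. \<forall>a b::real.
      f (\<lambda>c. a * x c + b * y c) = (\<lambda>c. a * f x c + b * f y c))"

end

theory Submission
  imports Defs
begin

text \<open>Cut [n] = [n'] \<times> [n_k] into n_k consecutive blocks of size n' = n_1...n_{k-1}.
  A vector x of W_n^(d-1) is determined by its block sums, which form a vector of
  W_{n_k}^(d-1), together with its blocks shifted to mean zero, which lie in W_{n'}^(d-1) and
  are embedded into W_{k-1} recursively. It is equivariant
  because (g_1,...,g_{n_k}; \<sigma>) carries block j to block \<sigma>(j) and permutes it there by
  g_{\<sigma>(j)}: the block sums are permuted by \<sigma>, while the centred blocks are permuted by \<sigma>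
  and acted on by the g_l, exactly as in the wreath product action on W_k.\<close>

lemma mult_add_less_mult:
  fixes j m u P :: nat
  assumes "j < m" and "u < P"
  shows "j * P + u < m * P"
proof -
  have "j * P + u < Suc j * P" using assms(2) by simp
  also have "\<dots> \<le> m * P" using assms(1) by (intro mult_le_mono1) simp
  finally show ?thesis .
qed

lemma mult_add_div_mod:
  fixes j u P :: nat
  assumes "u < P"
  shows "(j * P + u) div P = j" and "(j * P + u) mod P = u"
  using assms by auto

lemma mult_add_eq_mult_add_iff:
  fixes j k u v P :: nat
  assumes "u < P" and "v < P"
  shows "j * P + u = k * P + v \<longleftrightarrow> j = k \<and> u = v"
  using mult_add_div_mod[OF assms(1)] mult_add_div_mod[OF assms(2)] by metis

lemma mult_add_obtain:
  fixes p m P :: nat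
  assumes "p < m * P"
  obtains j u where "j < m" "u < P" "p = j * P + u"
proof
  show "p div P < m" using assms by (simp add: less_mult_imp_div_less)
  show "p mod P < P" using assms by (cases "P = 0") auto
qed simp

lemma block_permutation_permutes:
  fixes s :: "nat \<Rightarrow> nat" and e :: "nat \<Rightarrow> nat \<Rightarrow> nat"
  assumes s: "s permutes {..<m}" and e: "\<And>j. j < m \<Longrightarrow> e j permutes {..<P}"
  shows "(\<lambda>p. if p < m * P then s (p div P) * P + e (s (p div P)) (p mod P) else p)
           permutes {..<m * P}" (is "?t permutes _")
proof -
  have sj: "s j < m" if "j < m" for j using permutes_in_image[OF s] that by simp
  have ej: "e (s j) u < P" if "j < m" "u < P" for j u
    using permutes_in_image[OF e[OF sj[OF that(1)]]] that(2) by simp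
  have t: "?t (j * P + u) = s j * P + e (s j) u" if "j < m" "u < P" for j u
    using that mult_add_less_mult mult_add_div_mod by simp
  have maps_to: "?t p < m * P" if "p < m * P" for p
    using that by (elim mult_add_obtain) (simp add: t ej sj mult_add_less_mult)
  have "inj_on ?t {..<m * P}"
  proof (rule inj_onI)
    fix p q assume "p \<in> {..<m * P}" "q \<in> {..<m * P}" and eq: "?t p = ?t q"
    then obtain j u k v where jk: "j < m" "k < m" and uv: "u < P" "v < P"
      and p: "p = j * P + u" and q: "q = k * P + v"
      by (auto elim!: mult_add_obtain)
    have "s j * P + e (s j) u = s k * P + e (s k) v"
      using eq by (simp only: p q t jk uv)
    then have "s j = s k" and e_eq: "e (s j) u = e (s k) v"
      using mult_add_eq_mult_add_iff ej jk uv by blast+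
    then have "j = k" using permutes_inj[OF s] by (simp add: inj_eq)
    moreover from this have "u = v"
      using e_eq permutes_inj[OF e[OF sj[OF jk(1)]]] by (simp add: inj_eq)
    ultimately show "p = q" by (simp add: p q)
  qed
  moreover have "?t ` {..<m * P} = {..<m * P}"
    using calculation maps_to by (intro endo_inj_surj) auto
  ultimately show ?thesis
    by (intro bij_imp_permutes) (auto simp: bij_betw_def)
qed

lemma inSigR_ConsE:
  assumes "inSigR (m # ms) g"
  obtains s where "ms = []" "g = Base s" "s permutes {..<m}"
  | gs s where "ms \<noteq> []" "g = Wr gs s" "length gs = m" "\<forall>h\<in>set gs. inSigR ms h"
      "s permutes {..<m}"
  using assms by (cases g; cases ms) auto

lemma embR_Wr_block:
  assumes "j < m" and "u < prod_list ms"
  shows "embR (m # ms) (Wr gs s) (j * prod_list ms + u) = s j * prod_list ms + embR ms (gs ! s j) u"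
  using assms mult_add_less_mult mult_add_div_mod by simp

lemma embR_permutes: "inSigR ms g \<Longrightarrow> embR ms g permutes {..<prod_list ms}"
proof (induction ms arbitrary: g)
  case Nil
  then show ?case by simp
next
  case (Cons m ms)
  from Cons.prems show ?case
  proof (cases rule: inSigR_ConsE)
    case (1 s)
    then show ?thesis by simp
  next
    case (2 gs s)
    have "embR ms (gs ! j) permutes {..<prod_list ms}" if "j < m" for j
      using Cons.IH 2 that by simp
    then show ?thesis
      using block_permutation_permutes[OF 2(5), of "\<lambda>j. embR ms (gs ! j)"] 2(2) by simp
  qed
qed

lemma inv_embR_Wr_block:
  assumes g: "inSigR (m # ms) (Wr gs s)" and j: "j < m" and u: "u < prod_list ms"
  shows "inv (embR (m # ms) (Wr gs s)) (j * prod_list ms + u)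
           = inv s j * prod_list ms + inv (embR ms (gs ! j)) u"
proof -
  have s: "s permutes {..<m}" and e: "embR ms (gs ! j) permutes {..<prod_list ms}"
    using g j embR_permutes by auto
  have "inv s j < m" and "inv (embR ms (gs ! j)) u < prod_list ms"
    using j u permutes_in_image[OF permutes_inv[OF s]] permutes_in_image[OF permutes_inv[OF e]]
    by auto
  then have "embR (m # ms) (Wr gs s) (inv s j * prod_list ms + inv (embR ms (gs ! j)) u)
               = j * prod_list ms + u"
    by (simp add: embR_Wr_block permutes_inverses[OF s] permutes_inverses[OF e] mult_add_less_mult)
  then show ?thesis using permutes_inv_eq[OF embR_permutes[OF g]] by simp
qed

definition block :: "nat \<Rightarrow> (nat \<times> nat \<Rightarrow> real) \<Rightarrow> nat \<Rightarrow> nat \<times> nat \<Rightarrow> real" where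
  "block P x j = (\<lambda>(a, u). if u < P then x (a, j * P + u) else 0)"

definition centered :: "nat \<Rightarrow> (nat \<times> nat \<Rightarrow> real) \<Rightarrow> nat \<times> nat \<Rightarrow> real" where
  "centered P y = (\<lambda>(a, u). if u < P then y (a, u) - (\<Sum>v<P. y (a, v)) / real P else 0)"

lemma sum_block: "(\<Sum>u<P. block P x j (a, u)) = (\<Sum>u<P. x (a, j * P + u))"
  by (simp add: block_def)

lemma sum_actS_permutes:
  assumes "e permutes {..<P}"
  shows "(\<Sum>u<P. actS e y (a, u)) = (\<Sum>u<P. y (a, u))"
  using sum.permute[OF permutes_inv[OF assms], of "\<lambda>u. y (a, u)"] by (simp add: actS_def comp_def)

lemma centered_actS:
  assumes e: "e permutes {..<P}"
  shows "centered P (actS e y) = actS e (centered P y)"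
proof (intro ext, clarify)
  fix a u
  have "inv e u < P \<longleftrightarrow> u < P"
    using permutes_in_image[OF permutes_inv[OF e]] by simp
  then show "centered P (actS e y) (a, u) = actS e (centered P y) (a, u)"
    using sum_actS_permutes[OF e] by (simp add: centered_def actS_def)
qed

lemma block_actS_embR_Wr:
  assumes g: "inSigR (m # ms) (Wr gs s)" and j: "j < m"
  shows "block (prod_list ms) (actS (embR (m # ms) (Wr gs s)) x) j
           = actS (embR ms (gs ! j)) (block (prod_list ms) x (inv s j))"
proof (intro ext, clarify)
  fix a u
  have "embR ms (gs ! j) permutes {..<prod_list ms}"
    using g j embR_permutes by auto
  then have e: "inv (embR ms (gs ! j)) permutes {..<prod_list ms}"
    by (rule permutes_inv)
  show "block (prod_list ms) (actS (embR (m # ms) (Wr gs s)) x) j (a, u)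
          = actS (embR ms (gs ! j)) (block (prod_list ms) x (inv s j)) (a, u)"
  proof (cases "u < prod_list ms")
    case True
    then show ?thesis using permutes_in_image[OF e]
      by (simp add: block_def actS_def inv_embR_Wr_block[OF g j] del: embR.simps)
  next
    case False
    then show ?thesis using permutes_not_in[OF e] by (simp add: block_def actS_def)
  qed
qed

lemma sum_block_actS_embR_Wr:
  assumes g: "inSigR (m # ms) (Wr gs s)" and i: "i < m"
  shows "(\<Sum>u<prod_list ms. actS (embR (m # ms) (Wr gs s)) x (a, i * prod_list ms + u))
           = (\<Sum>u<prod_list ms. x (a, inv s i * prod_list ms + u))"
proof -
  have "embR ms (gs ! i) permutes {..<prod_list ms}"
    using g i embR_permutes by auto
  then show ?thesis
    using sum_actS_permutes block_actS_embR_Wr[OF g i] sum_block by metis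
qed

lemma centered_block_in_Wn:
  assumes "x \<in> Wn d n"
  shows "centered P (block P x j) \<in> Wn d P"
proof -
  have "centered P (block P x j) (a, u) = 0" if "\<not> a < d - 1" for a u
  proof -
    have "x (a, p) = 0" for p
      using assms that unfolding Wn_def by auto
    then show ?thesis by (simp add: centered_def block_def)
  qed
  moreover have "centered P (block P x j) (a, u) = 0" if "\<not> u < P" for a u
    using that by (simp add: centered_def)
  moreover have "(\<Sum>u<P. y u - (\<Sum>v<P. y v) / real P) = 0" for y :: "nat \<Rightarrow> real"
    by (cases "P = 0") (simp_all add: sum_subtractf)
  then have "(\<Sum>u<P. centered P (block P x j) (a, u)) = 0" for a
    by (simp add: centered_def block_def)
  ultimately show ?thesis
    unfolding Wn_def by blast
qed

lemma Wn_one_eq_zero: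
  assumes "x \<in> Wn d 1"
  shows "x = (\<lambda>_. 0)"
proof (intro ext, clarify)
  fix a i
  show "x (a, i) = 0"
  proof (rule ccontr)
    assume "x (a, i) \<noteq> 0"
    with assms have "a < d - 1" and "i = 0" unfolding Wn_def by auto
    with assms \<open>x (a, i) \<noteq> 0\<close> show False unfolding Wn_def by auto
  qed
qed

lemma sum_blocks_Wn:
  assumes "x \<in> Wn d (m * P)" and "a < d - 1"
  shows "(\<Sum>i<m. \<Sum>u<P. x (a, i * P + u)) = 0"
proof -
  have "(\<Sum>u<P. x (a, i * P + u)) = (\<Sum>p\<in>{i * P..<i * P + P}. x (a, p))" for i
    by (subst sum.atLeastLessThan_shift_0) (simp add: atLeast0LessThan comp_def)
  then have "(\<Sum>i<m. \<Sum>u<P. x (a, i * P + u)) = (\<Sum>p<m * P. x (a, p))"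
    by (simp add: sum.nat_group)
  with assms show ?thesis unfolding Wn_def by simp
qed

text \<open>Coordinates follow \<^const>\<open>inWR\<close>: [1, a, i] carries the sum of the i-th block of
  x in the copy a (for the innermost factor, ms = [], blocks have size 1 and this is just x),
  and 0 # j # c carries coordinate c of the recursive image of the centred j-th block.\<close>
fun Wemb :: "nat \<Rightarrow> nat list \<Rightarrow> (nat \<times> nat \<Rightarrow> real) \<Rightarrow> nat list \<Rightarrow> real" where
  "Wemb d (m # ms) x [Suc 0, a, i] =
     (if a < d - 1 \<and> i < m then \<Sum>u<prod_list ms. x (a, i * prod_list ms + u) else 0)"
| "Wemb d (m # ms) x (0 # j # c) =
     (if j < m then Wemb d ms (centered (prod_list ms) (block (prod_list ms) x j)) c else 0)"
| "Wemb _ _ _ _ = 0"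

lemma coordinate_cases:
  obtains a i where "c = [1, a, i]" | j c' where "c = 0 # j # c'"
  | "\<nexists>a i. c = [1, a, i]" and "\<nexists>j c'. c = 0 # j # c'"
  by blast

lemma Wemb_other: "\<nexists>a i. c = [1, a, i] \<Longrightarrow> \<nexists>j c'. c = 0 # j # c' \<Longrightarrow> Wemb d ms x c = 0"
  by (induction d ms x c rule: Wemb.induct) auto

lemma lastpart_other: "\<nexists>a i. c = [1, a, i] \<Longrightarrow> lastpart s x c = x c"
  unfolding lastpart_def by (auto simp: length_Suc_conv numeral_3_eq_3)

lemma actR_Wr_other: "\<nexists>j c'. c = 0 # j # c' \<Longrightarrow> actR (m # ms) (Wr gs s) x c = lastpart s x c"
  by (cases c; cases "tl c") auto

lemma actR_zero: "actR ms g (\<lambda>_. 0) = (\<lambda>_. 0)"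
proof
  show "actR ms g (\<lambda>_. 0) c = 0" for c
    by (induction ms g "\<lambda>_::nat list. 0::real" c rule: actR.induct) (auto simp: lastpart_def)
qed

lemma block_lincomb:
  "block P (\<lambda>c. \<alpha> * x c + \<beta> * y c) j = (\<lambda>c. \<alpha> * block P x j c + \<beta> * block P y j c)"
  by (auto simp: block_def)

lemma centered_lincomb:
  "centered P (\<lambda>c. \<alpha> * x c + \<beta> * y c) = (\<lambda>c. \<alpha> * centered P x c + \<beta> * centered P y c)"
  by (auto simp: centered_def sum.distrib sum_distrib_left[symmetric] add_divide_distrib
      algebra_simps)

lemma Wemb_lincomb:
  "Wemb d ms (\<lambda>c. \<alpha> * x c + \<beta> * y c) = (\<lambda>c. \<alpha> * Wemb d ms x c + \<beta> * Wemb d ms y c)"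
proof (induction ms arbitrary: x y)
  case Nil
  then show ?case by simp
next
  case (Cons m ms)
  show ?case
  proof
    fix c
    show "Wemb d (m # ms) (\<lambda>c. \<alpha> * x c + \<beta> * y c) c
            = \<alpha> * Wemb d (m # ms) x c + \<beta> * Wemb d (m # ms) y c"
      by (cases c rule: coordinate_cases)
        (simp_all add: sum.distrib sum_distrib_left block_lincomb centered_lincomb Cons.IH
          Wemb_other)
  qed
qed

lemma Wemb_support:
  assumes "Wemb d (m # ms) x c \<noteq> 0"
  shows "(\<exists>j c'. c = 0 # j # c' \<and> j < m) \<or> (\<exists>a i. c = [1, a, i] \<and> a < d - 1 \<and> i < m)"
  using assms by (cases c rule: coordinate_cases) (auto simp: Wemb_other split: if_splits)

lemma sum_Wemb_top:
  assumes "x \<in> Wn d (prod_list (m # ms))" and "a < d - 1"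
  shows "(\<Sum>i<m. Wemb d (m # ms) x [1, a, i]) = 0"
  using sum_blocks_Wn[of x d m "prod_list ms" a] assms by simp

lemma Wemb_in_inWR: "x \<in> Wn d (prod_list (m # ms)) \<Longrightarrow> inWR d (m # ms) (Wemb d (m # ms) x)"
proof (induction ms arbitrary: m x)
  case Nil
  have "\<exists>a i. c = [1, a, i] \<and> a < d - 1 \<and> i < m" if "Wemb d [m] x c \<noteq> 0" for c
    using Wemb_support[OF that] that by auto
  then show ?case using sum_Wemb_top[OF Nil] by simp
next
  case (Cons v ms)
  have "inWR d (v # ms) (\<lambda>c. Wemb d (m # v # ms) x (0 # j # c))" if "j < m" for j
    using Cons.IH[OF centered_block_in_Wn[OF Cons.prems]] that by simp
  then show ?case using Wemb_support sum_Wemb_top[OF Cons.prems] by simp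
qed

lemma Wemb_inj:
  assumes "x \<in> Wn d (prod_list ms)" and "y \<in> Wn d (prod_list ms)"
    and "Wemb d ms x = Wemb d ms y"
  shows "x = y"
  using assms
proof (induction ms arbitrary: x y)
  case Nil
  then show ?case using Wn_one_eq_zero by (metis prod_list.Nil)
next
  case (Cons m ms)
  define P where "P = prod_list ms"
  have xy: "Wemb d (m # ms) x c = Wemb d (m # ms) y c" for c
    using Cons.prems(3) by simp
  show ?case
  proof (intro ext, clarify)
    fix a p
    show "x (a, p) = y (a, p)"
    proof (cases "a < d - 1 \<and> p < m * P")
      case True
      then obtain j u where j: "j < m" and u: "u < P" and p: "p = j * P + u"
        by (auto elim: mult_add_obtain)
      have sums: "(\<Sum>v<P. x (a, j * P + v)) = (\<Sum>v<P. y (a, j * P + v))"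
        using xy[of "[1, a, j]"] True j by (simp add: P_def)
      have "Wemb d ms (centered P (block P x j)) = Wemb d ms (centered P (block P y j))"
        using xy[of "0 # j # _"] j by (auto simp: P_def)
      then have "centered P (block P x j) = centered P (block P y j)"
        using Cons.IH centered_block_in_Wn Cons.prems(1,2) by (simp add: P_def)
      then have "centered P (block P x j) (a, u) = centered P (block P y j) (a, u)"
        by simp
      then show ?thesis using sums u by (simp add: p centered_def block_def)
    next
      case False
      then have "x (a, p) = 0" and "y (a, p) = 0"
        using Cons.prems(1,2) unfolding Wn_def P_def by auto
      then show ?thesis by simp
    qed
  qed
qed

lemma Wemb_equivariant_Base:
  assumes s: "s permutes {..<m}"
  shows "Wemb d [m] (actS s x) = actR [m] (Base s) (Wemb d [m] x)"
proof
  fix c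
  have "inv s i < m \<longleftrightarrow> i < m" for i
    using permutes_in_image[OF permutes_inv[OF s]] by simp
  then show "Wemb d [m] (actS s x) c = actR [m] (Base s) (Wemb d [m] x) c"
  proof (cases c rule: coordinate_cases)
    case 3
    then show ?thesis by (metis Wemb_other actR.simps(1) lastpart_other)
  qed (simp_all add: actS_def lastpart_def)
qed

lemma Wemb_equivariant:
  "inSigR ms g \<Longrightarrow> Wemb d ms (actS (embR ms g) x) = actR ms g (Wemb d ms x)"
proof (induction ms arbitrary: g x)
  case Nil
  then show ?case by simp
next
  case (Cons m ms)
  from Cons.prems show ?case
  proof (cases rule: inSigR_ConsE)
    case (1 s)
    then show ?thesis using Wemb_equivariant_Base by simp
  next
    case (2 gs s)
    define P where "P = prod_list ms"
    let ?t = "embR (m # ms) (Wr gs s)"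
    have g: "inSigR (m # ms) (Wr gs s)" using Cons.prems 2 by simp
    have inv_s: "inv s j < m \<longleftrightarrow> j < m" for j
      using permutes_in_image[OF permutes_inv[OF 2(5)]] by simp
    have inv_s_out: "inv s j = j" if "\<not> j < m" for j
      using permutes_not_in[OF permutes_inv[OF 2(5)]] that by simp
    have sub: "Wemb d ms (centered P (block P (actS ?t x) j))
                 = actR ms (gs ! j) (Wemb d ms (centered P (block P x (inv s j))))" if "j < m" for j
    proof -
      have "embR ms (gs ! j) permutes {..<P}" and "inSigR ms (gs ! j)"
        using 2 that embR_permutes by (auto simp: P_def)
      then show ?thesis
        using Cons.IH block_actS_embR_Wr[OF g that] centered_actS by (simp add: P_def)
    qed
    show ?thesis unfolding 2(2)
    proof
      fix c
      show "Wemb d (m # ms) (actS ?t x) c = actR (m # ms) (Wr gs s) (Wemb d (m # ms) x) c"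
      proof (cases c rule: coordinate_cases)
        case (1 a i)
        then show ?thesis
          using sum_block_actS_embR_Wr[OF g] inv_s by (simp add: actR_Wr_other lastpart_def)
      next
        case (2 j c')
        then show ?thesis
          using sub inv_s inv_s_out actR_zero by (simp add: P_def)
      next
        case 3
        then show ?thesis by (metis Wemb_other actR_Wr_other lastpart_other)
      qed
    qed
  qed
qed

theorem lemma4p4:
  fixes ns :: "nat list" and d :: nat
  assumes "ns \<noteq> []" and "d \<ge> 1" and "\<forall>m\<in>set ns. m \<ge> 2"
  shows "\<exists>f. lin_on (Wn d (prod_list ns)) f
           \<and> inj_on f (Wn d (prod_list ns))
           \<and> f ` Wn d (prod_list ns) \<subseteq> Wk d ns
           \<and> (\<forall>g. inSigma ns g \<longrightarrow>
                (\<forall>x\<in>Wn d (prod_list ns).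
                   f (actS (embS ns g) x) = actW ns g (f x)))"
proof (intro exI conjI)
  obtain m ms where ns: "rev ns = m # ms"
    using assms(1) by (cases "rev ns") auto
  have P: "prod_list ns = prod_list (m # ms)"
    using prod_list.rev[of ns] by (simp only: ns)
  show "lin_on (Wn d (prod_list ns)) (Wemb d (rev ns))"
    unfolding lin_on_def by (simp add: Wemb_lincomb)
  show "inj_on (Wemb d (rev ns)) (Wn d (prod_list ns))"
    using Wemb_inj[of _ d "rev ns"] by (intro inj_onI) simp
  show "Wemb d (rev ns) ` Wn d (prod_list ns) \<subseteq> Wk d ns"
    unfolding Wk_def ns P using Wemb_in_inWR by blast
  show "\<forall>g. inSigma ns g \<longrightarrow> (\<forall>x\<in>Wn d (prod_list ns).
          Wemb d (rev ns) (actS (embS ns g) x) = actW ns g (Wemb d (rev ns) x))"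
    unfolding inSigma_def embS_def actW_def by (simp add: Wemb_equivariant)
qed

end
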